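(* Let $\pi\colon(X,T)\to(Y,T)$ be a factor map between minimal subshifts. Then either $\pi$ is distal or there exists $y\in Y$ such that the fiber $\pi^{-1}(y)$ contains a right asymptotic pair or a left asymptotic pair.
   Context: A factor map is distal if whenever $\pi(x)=\pi(x')$ and $x\neq x'$, $\inf_{k\in\mathbb{Z}}\mathrm{dist}(T^kx,T^kx')>0$. A pair $(x,\tilde x)\in\mathcal{A}^{\mathbb{Z}}\times\mathcal{A}^{\mathbb{Z}}$ is right asymptotic if there is $k\in\mathbb{Z}$ with $x_{(k,\infty)}=\tilde x_{(k,\infty)}$ and $x_k\neq\tilde x_k$; left asymptotic is defined symmetrically with $(-\infty,k)$. *)

theory Defs
  imports Complex_Main
begin

definition shift :: "(int \<Rightarrow> 'a) \<Rightarrow> (int \<Rightarrow> 'a)" where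
  "shift x = (\<lambda>i. x (i + 1))"

definition shiftk :: "int \<Rightarrow> (int \<Rightarrow> 'a) \<Rightarrow> (int \<Rightarrow> 'a)" where
  "shiftk k x = (\<lambda>i. x (i + k))"

definition sdist :: "(int \<Rightarrow> 'a) \<Rightarrow> (int \<Rightarrow> 'a) \<Rightarrow> real" where
  "sdist x y = (if x = y then 0
     else (1/2) ^ (LEAST n. \<exists>i. \<bar>i\<bar> = int n \<and> x i \<noteq> y i))"

text \<open>Closedness in the product topology (finite alphabet, discrete topology).\<close>
definition shift_closed :: "(int \<Rightarrow> 'a) set \<Rightarrow> bool" where
  "shift_closed X \<longleftrightarrow>
     (\<forall>x. (\<forall>n::int. \<exists>z\<in>X. \<forall>i. \<bar>i\<bar> \<le> n \<longrightarrow> z i = x i) \<longrightarrow> x \<in> X)"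

definition subshift :: "(int \<Rightarrow> 'a::finite) set \<Rightarrow> bool" where
  "subshift X \<longleftrightarrow> X \<noteq> {} \<and> shift_closed X \<and> shift ` X = X"

definition minimal_subshift :: "(int \<Rightarrow> 'a::finite) set \<Rightarrow> bool" where
  "minimal_subshift X \<longleftrightarrow> subshift X \<and> (\<forall>Z. Z \<subseteq> X \<longrightarrow> subshift Z \<longrightarrow> Z = X)"

definition shift_continuous_on ::
    "(int \<Rightarrow> 'a) set \<Rightarrow> ((int \<Rightarrow> 'a) \<Rightarrow> (int \<Rightarrow> 'b)) \<Rightarrow> bool" where
  "shift_continuous_on X \<pi> \<longleftrightarrow>
     (\<forall>x\<in>X. \<forall>n::int. \<exists>m::int. \<forall>x'\<in>X.
        (\<forall>i. \<bar>i\<bar> \<le> m \<longrightarrow> x' i = x i) \<longrightarrow> (\<forall>i. \<bar>i\<bar> \<le> n \<longrightarrow> \<pi> x' i = \<pi> x i))"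

definition factor_map ::
    "((int \<Rightarrow> 'a) \<Rightarrow> (int \<Rightarrow> 'b)) \<Rightarrow> (int \<Rightarrow> 'a) set \<Rightarrow> (int \<Rightarrow> 'b) set \<Rightarrow> bool" where
  "factor_map \<pi> X Y \<longleftrightarrow> \<pi> ` X = Y \<and> shift_continuous_on X \<pi>
     \<and> (\<forall>x\<in>X. \<pi> (shift x) = shift (\<pi> x))"

definition distal_factor ::
    "((int \<Rightarrow> 'a) \<Rightarrow> (int \<Rightarrow> 'b)) \<Rightarrow> (int \<Rightarrow> 'a) set \<Rightarrow> bool" where
  "distal_factor \<pi> X \<longleftrightarrow>
     (\<forall>x\<in>X. \<forall>x'\<in>X. \<pi> x = \<pi> x' \<and> x \<noteq> x' \<longrightarrow>
        (INF k. sdist (shiftk k x) (shiftk k x')) > 0)"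

definition right_asymptotic :: "(int \<Rightarrow> 'a) \<Rightarrow> (int \<Rightarrow> 'a) \<Rightarrow> bool" where
  "right_asymptotic x x' \<longleftrightarrow> (\<exists>k. (\<forall>i>k. x i = x' i) \<and> x k \<noteq> x' k)"

definition left_asymptotic :: "(int \<Rightarrow> 'a) \<Rightarrow> (int \<Rightarrow> 'a) \<Rightarrow> bool" where
  "left_asymptotic x x' \<longleftrightarrow> (\<exists>k. (\<forall>i<k. x i = x' i) \<and> x k \<noteq> x' k)"

end

theory Submission
  imports Defs "HOL-Library.Infinite_Set"
begin

(* If \<pi> is not distal, some fibre contains a proximal pair x \<noteq> x': the two points
   agree on arbitrarily long windows. If the set of coordinates where they differ is
   bounded below, its least element shows that x, x' are left asymptotic. Otherwise,
   left of every window there is a last disagreement d, followed by a run of agreement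
   as long as the window; shifting these positions d to the origin and passing to a
   cluster point (compactness of the shift space) yields a pair in X that differs at 0,
   agrees on all positive coordinates and, by continuity, still lies in one fibre. *)

definition agree_upto :: "int \<Rightarrow> (int \<Rightarrow> 'a) \<Rightarrow> (int \<Rightarrow> 'a) \<Rightarrow> bool" where
  "agree_upto n x y \<longleftrightarrow> (\<forall>i. \<bar>i\<bar> \<le> n \<longrightarrow> x i = y i)"

lemma agree_upto_mono: "agree_upto n x y \<Longrightarrow> m \<le> n \<Longrightarrow> agree_upto m x y"
  by (simp add: agree_upto_def)

lemma shiftk_0 [simp]: "shiftk 0 x = x"
  by (simp add: shiftk_def)

lemma shiftk_shiftk: "shiftk a (shiftk b x) = shiftk (a + b) x"
  by (simp add: shiftk_def ac_simps)

lemma shift_conv_shiftk: "shift = shiftk 1"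
  by (simp add: fun_eq_iff shift_def shiftk_def)

lemma subshift_shiftk_mem:
  assumes "subshift X" and "x \<in> X"
  shows "shiftk k x \<in> X"
proof (induction k rule: int_induct[where k = 0])
  case base
  show ?case using \<open>x \<in> X\<close> by simp
next
  case (step1 i)
  have "shiftk (i + 1) x = shift (shiftk i x)"
    by (simp add: shift_conv_shiftk shiftk_shiftk add.commute)
  then show ?case using step1 \<open>subshift X\<close> unfolding subshift_def by blast
next
  case (step2 i)
  then obtain z where "z \<in> X" "shiftk i x = shift z"
    using \<open>subshift X\<close> unfolding subshift_def by blast
  moreover have "shiftk (i - 1) x = shiftk (-1) (shiftk i x)"
    by (simp add: shiftk_shiftk)
  ultimately show ?case
    by (simp add: shift_conv_shiftk shiftk_shiftk)
qed

lemma equivariant_shiftk: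
  assumes "subshift X" and equivariant: "\<forall>x\<in>X. \<pi> (shift x) = shift (\<pi> x)" and "x \<in> X"
  shows "\<pi> (shiftk k x) = shiftk k (\<pi> x)"
proof (induction k rule: int_induct[where k = 0])
  case base
  show ?case by simp
next
  case (step1 i)
  have "\<pi> (shiftk (i + 1) x) = \<pi> (shift (shiftk i x))"
    by (simp add: shift_conv_shiftk shiftk_shiftk add.commute)
  also have "\<dots> = shift (shiftk i (\<pi> x))"
    using equivariant subshift_shiftk_mem[OF assms(1,3)] step1 by simp
  finally show ?case
    by (simp add: shift_conv_shiftk shiftk_shiftk add.commute)
next
  case (step2 i)
  let ?z = "shiftk (i - 1) x"
  have "shift (\<pi> ?z) = \<pi> (shift ?z)"
    using equivariant subshift_shiftk_mem[OF assms(1,3)] by simp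
  also have "\<dots> = shiftk i (\<pi> x)"
    using step2 by (simp add: shift_conv_shiftk shiftk_shiftk)
  finally have "shiftk (-1) (shift (\<pi> ?z)) = shiftk (-1) (shiftk i (\<pi> x))"
    by simp
  then show ?case
    by (simp add: shift_conv_shiftk shiftk_shiftk)
qed

lemma sdist_less_imp_agree_upto:
  assumes "sdist x y < (1/2) ^ n"
  shows "agree_upto (int n) x y"
proof (cases "x = y")
  case False
  let ?L = "LEAST n. \<exists>i. \<bar>i\<bar> = int n \<and> x i \<noteq> y i"
  have "((1::real)/2) ^ ?L < (1/2) ^ n"
    using assms False by (simp add: sdist_def)
  then have "n < ?L"
    by (simp add: power_strict_decreasing_iff)
  have "x i = y i" if "\<bar>i\<bar> \<le> int n" for i
  proof (rule ccontr)
    assume "x i \<noteq> y i"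
    then have "?L \<le> nat \<bar>i\<bar>"
      by (intro Least_le exI[of _ i]) simp
    with \<open>n < ?L\<close> that show False by linarith
  qed
  then show ?thesis by (simp add: agree_upto_def)
qed (simp add: agree_upto_def)

lemma proximal_pair_if_not_distal:
  assumes "\<not> distal_factor \<pi> X"
  obtains x x' where "x \<in> X" "x' \<in> X" "\<pi> x = \<pi> x'" "x \<noteq> x'"
    "\<And>n::nat. \<exists>k. agree_upto (int n) (shiftk k x) (shiftk k x')"
proof -
  obtain x x' where "x \<in> X" "x' \<in> X" "\<pi> x = \<pi> x'" "x \<noteq> x'"
    and not_pos: "\<not> (INF k. sdist (shiftk k x) (shiftk k x')) > 0"
    using assms unfolding distal_factor_def by blast
  have "\<exists>k. agree_upto (int n) (shiftk k x) (shiftk k x')" for n :: nat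
  proof -
    have "bdd_below (range (\<lambda>k. sdist (shiftk k x) (shiftk k x')))"
      by (rule bdd_belowI[of _ 0]) (auto simp: sdist_def)
    moreover have "(INF k. sdist (shiftk k x) (shiftk k x')) < (1/2) ^ n"
      using not_pos zero_less_power[of "1/2::real" n] by linarith
    ultimately obtain k where "sdist (shiftk k x) (shiftk k x') < (1/2) ^ n"
      by (auto simp: cINF_less_iff)
    then show ?thesis by (blast intro: sdist_less_imp_agree_upto)
  qed
  with that \<open>x \<in> X\<close> \<open>x' \<in> X\<close> \<open>\<pi> x = \<pi> x'\<close> \<open>x \<noteq> x'\<close> show ?thesis by blast
qed

lemma infinite_subset_agree_upto:
  fixes w :: "nat \<Rightarrow> int \<Rightarrow> 'c::finite"
  assumes "infinite S"
  shows "\<exists>S'\<subseteq>S. infinite S' \<and> (\<forall>n\<in>S'. \<forall>n'\<in>S'. agree_upto m (w n) (w n'))"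
proof -
  let ?window = "\<lambda>n. map (w n) [-m..m]"
  have "finite {ws :: 'c list. length ws = length [-m..m]}"
    using finite_lists_length_eq[OF finite_UNIV, of "length [-m..m]"] by simp
  then have "finite (?window ` S)"
    by (rule finite_subset[rotated]) auto
  then obtain n0 where "infinite {n\<in>S. ?window n = ?window n0}"
    using pigeonhole_infinite[OF assms] by blast
  moreover have "agree_upto m (w n) (w n')" if "?window n = ?window n'" for n n'
    using that by (auto simp: agree_upto_def abs_le_iff)
  ultimately show ?thesis
    by (intro exI[of _ "{n\<in>S. ?window n = ?window n0}"]) auto
qed

(* Konig's diagonal argument: nested infinite index sets on which the sequence agrees
   on ever larger windows; the cluster point takes coordinate i from any index in the
   set of level |i| + 1. *)
primrec agreement_sets :: "(nat \<Rightarrow> int \<Rightarrow> 'c) \<Rightarrow> nat \<Rightarrow> nat set" where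
  "agreement_sets w 0 = UNIV"
| "agreement_sets w (Suc m) = (SOME S. S \<subseteq> agreement_sets w m \<and> infinite S \<and>
      (\<forall>n\<in>S. \<forall>n'\<in>S. agree_upto (int m) (w n) (w n')))"

declare agreement_sets.simps(2) [simp del]

lemma agreement_sets_Suc:
  fixes w :: "nat \<Rightarrow> int \<Rightarrow> 'c::finite"
  assumes "infinite (agreement_sets w m)"
  shows "agreement_sets w (Suc m) \<subseteq> agreement_sets w m" "infinite (agreement_sets w (Suc m))"
    "\<And>n n'. n \<in> agreement_sets w (Suc m) \<Longrightarrow> n' \<in> agreement_sets w (Suc m) \<Longrightarrow>
      agree_upto (int m) (w n) (w n')"
  using someI_ex[OF infinite_subset_agree_upto[OF assms, where w = w and m = "int m"]]
  unfolding agreement_sets.simps(2) by simp_all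

lemma infinite_agreement_sets:
  fixes w :: "nat \<Rightarrow> int \<Rightarrow> 'c::finite"
  shows "infinite (agreement_sets w m)"
  by (induction m) (simp_all add: agreement_sets_Suc)

lemma agreement_sets_antimono:
  fixes w :: "nat \<Rightarrow> int \<Rightarrow> 'c::finite"
  shows "m \<le> m' \<Longrightarrow> agreement_sets w m' \<subseteq> agreement_sets w m"
  using lift_Suc_antimono_le[of "agreement_sets w"] agreement_sets_Suc(1)[OF infinite_agreement_sets]
  by blast

lemma sequence_has_cluster_point:
  fixes w :: "nat \<Rightarrow> int \<Rightarrow> 'c::finite"
  obtains v where "\<And>m. \<exists>n\<ge>m. agree_upto (int m) (w n) v"
proof
  define v where "v i = w (SOME n. n \<in> agreement_sets w (Suc (nat \<bar>i\<bar>))) i" for i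
  fix m
  obtain n where n: "n \<in> agreement_sets w (Suc m)" "n \<ge> m"
    using infinite_agreement_sets[of w "Suc m"] by (meson infinite_nat_iff_unbounded_le)
  have "w n i = v i" if "\<bar>i\<bar> \<le> int m" for i
  proof -
    let ?S = "agreement_sets w (Suc (nat \<bar>i\<bar>))"
    have "nat \<bar>i\<bar> \<le> m"
      using that by linarith
    then have "n \<in> ?S"
      using n(1) agreement_sets_antimono[of "Suc (nat \<bar>i\<bar>)" "Suc m" w] by auto
    moreover have "(SOME n. n \<in> ?S) \<in> ?S"
      using infinite_agreement_sets[of w] by (metis finite.emptyI some_in_eq)
    ultimately have "agree_upto \<bar>i\<bar> (w n) (w (SOME n. n \<in> ?S))"
      using agreement_sets_Suc(3)[OF infinite_agreement_sets] by fastforce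
    then show ?thesis
      unfolding v_def agree_upto_def by simp
  qed
  then show "\<exists>n\<ge>m. agree_upto (int m) (w n) v"
    using n(2) by (auto simp: agree_upto_def)
qed

lemma sequence_pair_has_cluster_point:
  fixes u u' :: "nat \<Rightarrow> int \<Rightarrow> 'c::finite"
  obtains a a' where "\<And>m. \<exists>n\<ge>m. agree_upto (int m) (u n) a \<and> agree_upto (int m) (u' n) a'"
    and "\<And>N. \<exists>n. agree_upto N (u n) a \<and> agree_upto N (u' n) a'"
proof -
  obtain v where v: "\<And>m. \<exists>n\<ge>m. agree_upto (int m) (\<lambda>i. (u n i, u' n i)) v"
    using sequence_has_cluster_point[of "\<lambda>n i. (u n i, u' n i)"] by blast
  define a a' where "a i = fst (v i)" and "a' i = snd (v i)" for i
  have close: "\<exists>n\<ge>m. agree_upto (int m) (u n) a \<and> agree_upto (int m) (u' n) a'" for m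
    using v[of m] unfolding agree_upto_def a_def a'_def by (metis fst_conv snd_conv)
  moreover have "\<exists>n. agree_upto N (u n) a \<and> agree_upto N (u' n) a'" for N
  proof -
    obtain n where "agree_upto (int (nat N)) (u n) a" "agree_upto (int (nat N)) (u' n) a'"
      using close by blast
    moreover have "N \<le> int (nat N)"
      by simp
    ultimately show ?thesis
      by (blast intro: agree_upto_mono)
  qed
  ultimately show ?thesis
    by (rule that)
qed

lemma shift_closed_limit_mem:
  assumes "shift_closed X" and "\<And>n. u n \<in> X" and "\<And>N. \<exists>n. agree_upto N (u n) a"
  shows "a \<in> X"
  using assms unfolding shift_closed_def agree_upto_def by metis

lemma shift_continuous_on_limits_eq:
  assumes cont: "shift_continuous_on X \<pi>" and "a \<in> X" "a' \<in> X"
    and "\<And>n. u n \<in> X" "\<And>n. u' n \<in> X" "\<And>n. \<pi> (u n) = \<pi> (u' n)"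
    and limits: "\<And>N. \<exists>n. agree_upto N (u n) a \<and> agree_upto N (u' n) a'"
  shows "\<pi> a = \<pi> a'"
proof
  fix i
  obtain M where M: "\<forall>z\<in>X. agree_upto M z a \<longrightarrow> agree_upto \<bar>i\<bar> (\<pi> z) (\<pi> a)"
    using cont \<open>a \<in> X\<close> unfolding shift_continuous_on_def agree_upto_def by blast
  obtain M' where M': "\<forall>z\<in>X. agree_upto M' z a' \<longrightarrow> agree_upto \<bar>i\<bar> (\<pi> z) (\<pi> a')"
    using cont \<open>a' \<in> X\<close> unfolding shift_continuous_on_def agree_upto_def by blast
  obtain n where "agree_upto (max M M') (u n) a" "agree_upto (max M M') (u' n) a'"
    using limits by blast
  then have "agree_upto M (u n) a" "agree_upto M' (u' n) a'"
    by (auto elim: agree_upto_mono)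
  then have "agree_upto \<bar>i\<bar> (\<pi> (u n)) (\<pi> a)" "agree_upto \<bar>i\<bar> (\<pi> (u' n)) (\<pi> a')"
    using M M' assms(4,5) by blast+
  then show "\<pi> a i = \<pi> a' i"
    using assms(6)[of n] by (simp add: agree_upto_def)
qed

definition nearly_right_asymptotic :: "(int \<Rightarrow> 'a) \<Rightarrow> (int \<Rightarrow> 'a) \<Rightarrow> bool" where
  "nearly_right_asymptotic x x' \<longleftrightarrow>
     (\<forall>n::nat. \<exists>d. x d \<noteq> x' d \<and> (\<forall>j. d < j \<and> j \<le> d + int n \<longrightarrow> x j = x' j))"

lemma left_asymptotic_if_bdd_below:
  assumes "x \<noteq> x'" and "bdd_below {j. x j \<noteq> x' j}"
  shows "left_asymptotic x x'"
proof -
  define D where "D = {j. x j \<noteq> x' j}"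
  obtain b where b: "\<And>j. j \<in> D \<Longrightarrow> b \<le> j"
    using assms(2) unfolding D_def bdd_below_def by blast
  obtain i where "i \<in> D"
    using \<open>x \<noteq> x'\<close> unfolding D_def by blast
  let ?k = "Min (D \<inter> {b..i})"
  have "?k \<in> D" "\<And>j. j \<in> D \<Longrightarrow> ?k \<le> j"
    using Min_in[of "D \<inter> {b..i}"] Min_le[of "D \<inter> {b..i}"] \<open>i \<in> D\<close> b by fastforce+
  then show ?thesis
    unfolding left_asymptotic_def D_def by force
qed

lemma nearly_right_asymptotic_if_not_bdd_below:
  assumes "\<not> bdd_below {j. x j \<noteq> x' j}"
    and windows: "\<And>n::nat. \<exists>k. agree_upto (int n) (shiftk k x) (shiftk k x')"
  shows "nearly_right_asymptotic x x'"
  unfolding nearly_right_asymptotic_def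
proof
  fix n
  define D where "D = {j. x j \<noteq> x' j}"
  obtain k where k: "agree_upto (int n) (shiftk k x) (shiftk k x')"
    using windows by blast
  obtain i where "i \<in> D" "i < k - int n"
    using assms(1) unfolding D_def bdd_below_def by (meson not_le)
  let ?d = "Max (D \<inter> {i..<k - int n})"
  have d: "?d \<in> D" "?d < k - int n" "i \<le> ?d"
    and d_max: "\<And>j. j \<in> D \<Longrightarrow> i \<le> j \<Longrightarrow> j < k - int n \<Longrightarrow> j \<le> ?d"
    using Max_in[of "D \<inter> {i..<k - int n}"] Max_ge[of "D \<inter> {i..<k - int n}"] \<open>i \<in> D\<close>
      \<open>i < k - int n\<close> by fastforce+
  moreover have "x j = x' j" if "?d < j" "j \<le> ?d + int n" for j
  proof (cases "j < k - int n")
    case True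
    with that d d_max[of j] show ?thesis
      unfolding D_def by fastforce
  next
    case False
    then have "\<bar>j - k\<bar> \<le> int n"
      using that d by linarith
    then show ?thesis
      using k unfolding agree_upto_def shiftk_def by (metis diff_add_cancel)
  qed
  ultimately show "\<exists>d. x d \<noteq> x' d \<and> (\<forall>j. d < j \<and> j \<le> d + int n \<longrightarrow> x j = x' j)"
    unfolding D_def by blast
qed

lemma nearly_right_asymptotic_imp_right_asymptotic_pair:
  assumes X: "subshift X" and cont: "shift_continuous_on X \<pi>"
    and equivariant: "\<forall>x\<in>X. \<pi> (shift x) = shift (\<pi> x)"
    and "x \<in> X" "x' \<in> X" "\<pi> x = \<pi> x'" and "nearly_right_asymptotic x x'"
  obtains a a' where "a \<in> X" "a' \<in> X" "\<pi> a = \<pi> a'" "right_asymptotic a a'"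
proof -
  obtain d where d: "\<And>n. x (d n) \<noteq> x' (d n)"
    and agree: "\<And>n j. d n < j \<Longrightarrow> j \<le> d n + int n \<Longrightarrow> x j = x' j"
    using \<open>nearly_right_asymptotic x x'\<close> unfolding nearly_right_asymptotic_def by metis
  define u where "u n = shiftk (d n) x" for n
  define u' where "u' n = shiftk (d n) x'" for n
  have u_mem: "u n \<in> X" "u' n \<in> X" for n
    unfolding u_def u'_def using X \<open>x \<in> X\<close> \<open>x' \<in> X\<close> by (blast intro: subshift_shiftk_mem)+
  have u_fibre: "\<pi> (u n) = \<pi> (u' n)" for n
    unfolding u_def u'_def using equivariant_shiftk[OF X equivariant] \<open>x \<in> X\<close> \<open>x' \<in> X\<close> \<open>\<pi> x = \<pi> x'\<close>
    by simp
  obtain a a' where close: "\<And>m. \<exists>n\<ge>m. agree_upto (int m) (u n) a \<and> agree_upto (int m) (u' n) a'"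
    and limits: "\<And>N. \<exists>n. agree_upto N (u n) a \<and> agree_upto N (u' n) a'"
    by (rule sequence_pair_has_cluster_point[of u u']) blast
  have closed: "shift_closed X"
    using X unfolding subshift_def by blast
  have "a \<in> X"
    by (rule shift_closed_limit_mem[where u = u, OF closed u_mem(1)]) (use limits in blast)
  moreover have "a' \<in> X"
    by (rule shift_closed_limit_mem[where u = u', OF closed u_mem(2)]) (use limits in blast)
  moreover have "\<pi> a = \<pi> a'"
    using cont calculation u_mem u_fibre limits by (rule shift_continuous_on_limits_eq)
  moreover have "right_asymptotic a a'"
    unfolding right_asymptotic_def
  proof (intro exI conjI allI impI)
    obtain n where "agree_upto 0 (u n) a" "agree_upto 0 (u' n) a'"
      using close[of 0] by auto
    then show "a 0 \<noteq> a' 0"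
      using d[of n] by (simp add: agree_upto_def u_def u'_def shiftk_def)
  next
    fix i :: int
    assume "0 < i"
    obtain n where "n \<ge> nat i" "agree_upto i (u n) a" "agree_upto i (u' n) a'"
      using close[of "nat i"] \<open>0 < i\<close> by auto
    then show "a i = a' i"
      using agree[of n "i + d n"] \<open>0 < i\<close> by (simp add: agree_upto_def u_def u'_def shiftk_def)
  qed
  ultimately show ?thesis
    using that by blast
qed

theorem lemma6p4:
  fixes \<pi> :: "(int \<Rightarrow> 'a::finite) \<Rightarrow> (int \<Rightarrow> 'b::finite)"
    and X :: "(int \<Rightarrow> 'a) set" and Y :: "(int \<Rightarrow> 'b) set"
  assumes "minimal_subshift X" and "minimal_subshift Y" and "factor_map \<pi> X Y"
  shows "distal_factor \<pi> X \<or>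
    (\<exists>y\<in>Y. \<exists>x\<in>X. \<exists>x'\<in>X. \<pi> x = y \<and> \<pi> x' = y \<and>
        (right_asymptotic x x' \<or> left_asymptotic x x'))"
proof (cases "distal_factor \<pi> X")
  case False
  then obtain x x' where pair: "x \<in> X" "x' \<in> X" "\<pi> x = \<pi> x'" and "x \<noteq> x'"
    and windows: "\<And>n::nat. \<exists>k. agree_upto (int n) (shiftk k x) (shiftk k x')"
    by (rule proximal_pair_if_not_distal) blast
  have X: "subshift X"
    using assms(1) unfolding minimal_subshift_def by blast
  have image: "\<pi> ` X = Y" and cont: "shift_continuous_on X \<pi>"
    and equivariant: "\<forall>x\<in>X. \<pi> (shift x) = shift (\<pi> x)"
    using assms(3) unfolding factor_map_def by blast+
  have "left_asymptotic x x' \<or> nearly_right_asymptotic x x'"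
    using left_asymptotic_if_bdd_below[OF \<open>x \<noteq> x'\<close>]
      nearly_right_asymptotic_if_not_bdd_below[OF _ windows] by metis
  then obtain a a' where fibre: "a \<in> X" "a' \<in> X" "\<pi> a = \<pi> a'"
    and "right_asymptotic a a' \<or> left_asymptotic a a'"
    using pair nearly_right_asymptotic_imp_right_asymptotic_pair[OF X cont equivariant pair] by blast
  moreover have "\<pi> a \<in> Y"
    using image fibre by blast
  ultimately show ?thesis
    by (intro disjI2 bexI[of _ "\<pi> a"]) auto
qed simp

end
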